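(* There is a universal constant $c>0$ such that the following holds. Let $\Omega \subset \mathbb{R}^2$ be a connected domain and let $\varepsilon>0$ satisfy $\varepsilon \le |\Omega|^{1/2}/8$. Then $$ \left| \left\{x \in \mathbb{R}^2 \setminus \Omega: d(x, \Omega) \leq \varepsilon\right\} \right| \leq c \cdot \varepsilon \cdot |\partial \Omega|.$$
   Context: $|\Omega|$ and the left-hand side denote two-dimensional Lebesgue measure; $d(x,\Omega)$ is Euclidean distance from $x$ to $\Omega$; $|\partial\Omega|$ denotes the one-dimensional Hausdorff measure (length) of the boundary, with the convention $|\partial\Omega|=\infty$ if the boundary is not rectifiable. *)

theory Defs
  imports "HOL-Analysis.Analysis"
begin

text \<open>One-dimensional Hausdorff measure (normalised so that it agrees with length
  on rectifiable curves): the delta-premeasure is the infimum of the sums of diameters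
  over countable covers by bounded sets of diameter at most delta; the measure is the
  supremum (= limit as delta goes to 0) of these.\<close>

definition hausdorff1_pre :: "real \<Rightarrow> 'a::metric_space set \<Rightarrow> ennreal" where
  "hausdorff1_pre \<delta> S =
     (INF C \<in> {C :: nat \<Rightarrow> 'a set. S \<subseteq> (\<Union>i. C i) \<and> (\<forall>i. bounded (C i) \<and> diameter (C i) \<le> \<delta>)}.
        (\<Sum>i. ennreal (diameter (C i))))"

definition hausdorff1 :: "'a::metric_space set \<Rightarrow> ennreal" where
  "hausdorff1 S = (SUP \<delta> \<in> {0<..}. hausdorff1_pre \<delta> S)"

end

theory Submission
  imports Defs
begin

text \<open>Cover \<open>\<partial>\<Omega>\<close> by sets \<open>C\<^sub>i\<close> of diameter at most \<open>\<epsilon>\<close> and tile the plane by squares \<open>Q\<close> of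
  side \<open>2\<epsilon>\<close>, each with a concentric window \<open>T\<close> of side \<open>6\<epsilon>\<close>. Let \<open>B\<close> be the sum of
  \<open>2 diam C\<^sub>i\<close> over the \<open>C\<^sub>i\<close> meeting \<open>T\<close>, which bounds the measure of both coordinate
  projections of \<open>\<partial>\<Omega> \<inter> T\<close>. If \<open>B \<ge> \<epsilon>/2\<close>, then \<open>|Q| = 4\<epsilon>\<^sup>2 \<le> 8\<epsilon>B\<close>. Otherwise there are
  two vertical and two horizontal lines near the sides of \<open>T\<close> whose segments in \<open>T\<close> miss
  \<open>\<partial>\<Omega>\<close>. The rectangle they bound has area \<open>< 36\<epsilon>\<^sup>2 \<le> |\<Omega>|\<close> and meets \<open>\<Omega>\<close> near any point
  of the outer neighbourhood in \<open>Q\<close>, so the connected \<open>\<Omega>\<close> crosses its boundary and all four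
  segments lie in \<open>\<Omega>\<close>. Every vertical segment of \<open>T\<close> missing \<open>\<partial>\<Omega>\<close> therefore lies in \<open>\<Omega>\<close>,
  so the outer neighbourhood in \<open>Q\<close> lies over the projection of \<open>\<partial>\<Omega> \<inter> T\<close> and has measure
  \<open>\<le> 2\<epsilon>B\<close>. Each \<open>C\<^sub>i\<close> meets at most 25 windows, so summing over \<open>Q\<close> gives the constant
  \<open>8 \<cdot> 2 \<cdot> 25 = 400\<close>.\<close>

definition outer_parallel_set :: "'a::metric_space set \<Rightarrow> real \<Rightarrow> 'a set" where
  "outer_parallel_set \<Omega> \<epsilon> = {x. x \<notin> \<Omega> \<and> infdist x \<Omega> \<le> \<epsilon>}"

definition square :: "real \<Rightarrow> real \<Rightarrow> real \<Rightarrow> (real^2) set" where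
  "square h a b = cbox (vector [a, b]) (vector [a + h, b + h])"

definition vertical_segment :: "real \<Rightarrow> real \<Rightarrow> real \<Rightarrow> (real^2) set" where
  "vertical_segment u b1 b2 = cbox (vector [u, b1]) (vector [u, b2])"

definition horizontal_segment :: "real \<Rightarrow> real \<Rightarrow> real \<Rightarrow> (real^2) set" where
  "horizontal_segment v a1 a2 = cbox (vector [a1, v]) (vector [a2, v])"

lemma mem_cbox_vector2:
  fixes p :: "real^2"
  shows "p \<in> cbox (vector [a, b]) (vector [c, d]) \<longleftrightarrow> a \<le> p$1 \<and> p$1 \<le> c \<and> b \<le> p$2 \<and> p$2 \<le> d"
  by (auto simp: mem_box_cart forall_2)

lemma mem_box_vector2:
  fixes p :: "real^2"
  shows "p \<in> box (vector [a, b]) (vector [c, d]) \<longleftrightarrow> a < p$1 \<and> p$1 < c \<and> b < p$2 \<and> p$2 < d"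
  by (auto simp: mem_box_cart forall_2)

lemma mem_square:
  "p \<in> square h a b \<longleftrightarrow> a \<le> p$1 \<and> p$1 \<le> a + h \<and> b \<le> p$2 \<and> p$2 \<le> b + h"
  by (simp add: square_def mem_cbox_vector2)

lemma mem_vertical_segment:
  "p \<in> vertical_segment u b1 b2 \<longleftrightarrow> p$1 = u \<and> b1 \<le> p$2 \<and> p$2 \<le> b2"
  by (auto simp: vertical_segment_def mem_cbox_vector2)

lemma mem_horizontal_segment:
  "p \<in> horizontal_segment v a1 a2 \<longleftrightarrow> p$2 = v \<and> a1 \<le> p$1 \<and> p$1 \<le> a2"
  by (auto simp: horizontal_segment_def mem_cbox_vector2)

lemma connected_vertical_segment: "connected (vertical_segment u b1 b2)"
  and connected_horizontal_segment: "connected (horizontal_segment v a1 a2)"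
  by (simp_all add: vertical_segment_def horizontal_segment_def is_interval_connected)

lemma emeasure_cbox_vector2:
  assumes "a \<le> c" "b \<le> d"
  shows "emeasure lborel (cbox (vector [a, b]) (vector [c, d]) :: (real^2) set)
    = ennreal ((c - a) * (d - b))"
proof -
  have "(vector [a, b] :: real^2) \<in> cbox (vector [a, b]) (vector [c, d])"
    using assms by (simp add: mem_cbox_vector2)
  then have "cbox (vector [a, b]) (vector [c, d]) \<noteq> ({} :: (real^2) set)"
    by blast
  then show ?thesis
    by (simp add: emeasure_eq_measure2 content_cbox_cart UNIV_2)
qed

lemma connected_subset_or_disjoint_if_frontier_disjoint:
  assumes "connected S" "S \<inter> frontier \<Omega> = {}"
  shows "S \<subseteq> \<Omega> \<or> S \<inter> \<Omega> = {}"
  using connected_Int_frontier[OF assms(1), of \<Omega>] assms(2) by blast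

lemma connected_subset_if_frontier_disjoint:
  assumes "connected \<Omega>" "connected L" "L \<inter> frontier \<Omega> = {}" "frontier R \<subseteq> L"
    and "\<Omega> \<inter> R \<noteq> {}" "\<not> \<Omega> \<subseteq> R"
  shows "L \<subseteq> \<Omega>"
proof -
  have "\<Omega> \<inter> frontier R \<noteq> {}"
    using connected_Int_frontier[OF assms(1)] assms(5,6) by blast
  then have "L \<inter> \<Omega> \<noteq> {}"
    using assms(4) by blast
  then show ?thesis
    using connected_subset_or_disjoint_if_frontier_disjoint[OF assms(2,3)] by blast
qed

lemma grid_segments_subset_domain:
  fixes \<Omega> :: "(real^2) set"
  assumes "connected \<Omega>"
    and u: "a1 \<le> u1" "u1 \<le> u2" "u2 \<le> a2" and v: "b1 \<le> v1" "v1 \<le> v2" "v2 \<le> b2"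
    and avoid: "(vertical_segment u1 b1 b2 \<union> horizontal_segment v1 a1 a2 \<union>
      vertical_segment u2 b1 b2 \<union> horizontal_segment v2 a1 a2) \<inter> frontier \<Omega> = {}"
    and y: "y \<in> \<Omega>" "y \<in> cbox (vector [u1, v1]) (vector [u2, v2])"
    and escapes: "\<not> \<Omega> \<subseteq> cbox (vector [u1, v1]) (vector [u2, v2])"
  shows "horizontal_segment v1 a1 a2 \<subseteq> \<Omega>"
proof -
  let ?L = "vertical_segment u1 b1 b2 \<union> horizontal_segment v1 a1 a2 \<union>
    vertical_segment u2 b1 b2 \<union> horizontal_segment v2 a1 a2"
  have meet: "vector [u, v] \<in> vertical_segment u b1 b2 \<inter> horizontal_segment v a1 a2"
    if "a1 \<le> u" "u \<le> a2" "b1 \<le> v" "v \<le> b2" for u v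
    using that by (simp add: mem_vertical_segment mem_horizontal_segment)
  have "connected ?L"
    using u v meet[of u1 v1] meet[of u2 v1] meet[of u1 v2]
    by (intro connected_Un connected_vertical_segment connected_horizontal_segment) auto
  moreover have "frontier (cbox (vector [u1, v1]) (vector [u2, v2])) \<subseteq> ?L"
    using u v by (auto simp: frontier_cbox mem_cbox_vector2 mem_box_vector2
        mem_vertical_segment mem_horizontal_segment)
  ultimately have "?L \<subseteq> \<Omega>"
    using connected_subset_if_frontier_disjoint[OF \<open>connected \<Omega>\<close> _ avoid _ _ escapes] y by blast
  then show ?thesis
    by blast
qed

lemma Ioo_not_subset_if_emeasure_less:
  assumes "A \<in> sets borel" "emeasure lborel A < ennreal (r - l)"
  shows "\<exists>u\<in>{l<..<r}. u \<notin> A"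
proof (rule ccontr)
  assume "\<not> ?thesis"
  then have "emeasure lborel {l<..<r} \<le> emeasure lborel A"
    using assms(1) by (intro emeasure_mono) auto
  with assms(2) show False
    by (cases "l < r") (auto simp: ennreal_neg)
qed

lemma infdist_less_imp_dist_less:
  assumes "A \<noteq> {}" "infdist x A < r"
  obtains y where "y \<in> A" "dist x y < r"
proof -
  have "bdd_below (dist x ` A)"
    by (rule bdd_belowI[of _ 0]) auto
  then show ?thesis
    using assms cINF_less_iff[of A "dist x" r] that by (auto simp: infdist_notempty)
qed

lemma exists_horizontal_segment_in_domain:
  fixes \<Omega> :: "(real^2) set"
  assumes "connected \<Omega>" "\<epsilon> > 0" and big: "ennreal ((8 * \<epsilon>)\<^sup>2) \<le> emeasure lborel \<Omega>"
    and A1: "A1 \<in> sets borel" "emeasure lborel A1 < ennreal (\<epsilon> / 2)"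
    and A2: "A2 \<in> sets borel" "emeasure lborel A2 < ennreal (\<epsilon> / 2)"
    and frontier_coords: "\<And>p. p \<in> frontier \<Omega> \<inter> square (6 * \<epsilon>) (a - 2 * \<epsilon>) (b - 2 * \<epsilon>) \<Longrightarrow>
      p$1 \<in> A1 \<and> p$2 \<in> A2"
    and y: "y \<in> \<Omega>"
      "y \<in> box (vector [a - 3 * \<epsilon> / 2, b - 3 * \<epsilon> / 2]) (vector [a + 7 * \<epsilon> / 2, b + 7 * \<epsilon> / 2])"
  shows "\<exists>v. b - 2 * \<epsilon> \<le> v \<and> v \<le> b + 4 * \<epsilon> \<and> horizontal_segment v (a - 2 * \<epsilon>) (a + 4 * \<epsilon>) \<subseteq> \<Omega>"
proof -
  have gap: "\<exists>u\<in>{l<..<l + \<epsilon> / 2}. u \<notin> A"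
    if "A \<in> sets borel" "emeasure lborel A < ennreal (\<epsilon> / 2)" for A l
    using Ioo_not_subset_if_emeasure_less[OF that(1), of "l + \<epsilon> / 2" l] that(2) by simp
  obtain u1 u2 v1 v2 where
    u1: "u1 \<in> {a - 2 * \<epsilon><..<a - 2 * \<epsilon> + \<epsilon> / 2}" "u1 \<notin> A1" and
    u2: "u2 \<in> {a + 7 * \<epsilon> / 2<..<a + 7 * \<epsilon> / 2 + \<epsilon> / 2}" "u2 \<notin> A1" and
    v1: "v1 \<in> {b - 2 * \<epsilon><..<b - 2 * \<epsilon> + \<epsilon> / 2}" "v1 \<notin> A2" and
    v2: "v2 \<in> {b + 7 * \<epsilon> / 2<..<b + 7 * \<epsilon> / 2 + \<epsilon> / 2}" "v2 \<notin> A2"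
    using gap[OF A1] gap[OF A2] by meson
  let ?R = "cbox (vector [u1, v1]) (vector [u2, v2]) :: (real^2) set"
  have "(vertical_segment u1 (b - 2 * \<epsilon>) (b + 4 * \<epsilon>) \<union>
      horizontal_segment v1 (a - 2 * \<epsilon>) (a + 4 * \<epsilon>) \<union>
      vertical_segment u2 (b - 2 * \<epsilon>) (b + 4 * \<epsilon>) \<union>
      horizontal_segment v2 (a - 2 * \<epsilon>) (a + 4 * \<epsilon>)) \<inter> frontier \<Omega> = {}"
    using u1 u2 v1 v2 frontier_coords
    by (fastforce simp: mem_vertical_segment mem_horizontal_segment mem_square)
  moreover have "y \<in> ?R"
    using y u1 u2 v1 v2 by (auto simp: mem_cbox_vector2 mem_box_vector2)
  moreover have "\<not> \<Omega> \<subseteq> ?R"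
  proof
    assume "\<Omega> \<subseteq> ?R"
    then have "emeasure lborel \<Omega> \<le> emeasure lborel ?R"
      by (intro emeasure_mono) auto
    also have "\<dots> = ennreal ((u2 - u1) * (v2 - v1))"
      using u1 u2 v1 v2 \<open>\<epsilon> > 0\<close> by (intro emeasure_cbox_vector2) auto
    finally have "ennreal ((8 * \<epsilon>)\<^sup>2) \<le> ennreal ((u2 - u1) * (v2 - v1))"
      by (rule order_trans[OF big])
    then have "(8 * \<epsilon>)\<^sup>2 \<le> (u2 - u1) * (v2 - v1)"
      using u1 u2 v1 v2 \<open>\<epsilon> > 0\<close> by (subst (asm) ennreal_le_iff) auto
    moreover have "(u2 - u1) * (v2 - v1) \<le> (6 * \<epsilon>) * (6 * \<epsilon>)"
      using u1 u2 v1 v2 \<open>\<epsilon> > 0\<close> by (intro mult_mono) auto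
    moreover have "0 < \<epsilon> * \<epsilon>"
      using \<open>\<epsilon> > 0\<close> by simp
    ultimately show False
      by (simp add: power2_eq_square)
  qed
  ultimately have "horizontal_segment v1 (a - 2 * \<epsilon>) (a + 4 * \<epsilon>) \<subseteq> \<Omega>"
    using u1 u2 v1 v2 \<open>\<epsilon> > 0\<close>
    by (intro grid_segments_subset_domain[OF \<open>connected \<Omega>\<close> _ _ _ _ _ _ _ y(1)]) auto
  then show ?thesis
    using v1 \<open>\<epsilon> > 0\<close> by (intro exI[of _ v1]) auto
qed

lemma outer_parallel_set_square_subset_vimage:
  fixes \<Omega> :: "(real^2) set"
  assumes "connected \<Omega>" "\<epsilon> > 0" and big: "ennreal ((8 * \<epsilon>)\<^sup>2) \<le> emeasure lborel \<Omega>"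
    and A1: "A1 \<in> sets borel" "emeasure lborel A1 < ennreal (\<epsilon> / 2)"
    and A2: "A2 \<in> sets borel" "emeasure lborel A2 < ennreal (\<epsilon> / 2)"
    and frontier_coords: "\<And>p. p \<in> frontier \<Omega> \<inter> square (6 * \<epsilon>) (a - 2 * \<epsilon>) (b - 2 * \<epsilon>) \<Longrightarrow>
      p$1 \<in> A1 \<and> p$2 \<in> A2"
  shows "outer_parallel_set \<Omega> \<epsilon> \<inter> square (2 * \<epsilon>) a b \<subseteq> {p. p$1 \<in> A1}"
proof
  fix p
  assume p: "p \<in> outer_parallel_set \<Omega> \<epsilon> \<inter> square (2 * \<epsilon>) a b"
  show "p \<in> {p. p$1 \<in> A1}"
  proof (rule ccontr)
    assume "p \<notin> {p. p$1 \<in> A1}"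
    have "\<Omega> \<noteq> {}"
      using big \<open>\<epsilon> > 0\<close> by auto
    moreover have "infdist p \<Omega> < 3 * \<epsilon> / 2"
      using p \<open>\<epsilon> > 0\<close> by (simp add: outer_parallel_set_def)
    ultimately obtain y where y: "y \<in> \<Omega>" "dist p y < 3 * \<epsilon> / 2"
      by (rule infdist_less_imp_dist_less)
    have close: "p$k - 3 * \<epsilon> / 2 < y$k \<and> y$k < p$k + 3 * \<epsilon> / 2" for k
      using dist_vec_nth_le[of p k y] y(2) unfolding dist_real_def by arith
    have "y \<in> box (vector [a - 3 * \<epsilon> / 2, b - 3 * \<epsilon> / 2]) (vector [a + 7 * \<epsilon> / 2, b + 7 * \<epsilon> / 2])"
      using p close[of 1] close[of 2] by (auto simp: mem_box_vector2 mem_square)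
    then obtain v where v: "b - 2 * \<epsilon> \<le> v" "v \<le> b + 4 * \<epsilon>"
      and "horizontal_segment v (a - 2 * \<epsilon>) (a + 4 * \<epsilon>) \<subseteq> \<Omega>"
      using exists_horizontal_segment_in_domain[OF assms y(1)] by blast
    then have "vector [p$1, v] \<in> vertical_segment (p$1) (b - 2 * \<epsilon>) (b + 4 * \<epsilon>) \<inter> \<Omega>"
      using p \<open>\<epsilon> > 0\<close> by (auto simp: mem_vertical_segment mem_horizontal_segment mem_square)
    moreover have "vertical_segment (p$1) (b - 2 * \<epsilon>) (b + 4 * \<epsilon>) \<inter> frontier \<Omega> = {}"
      using p frontier_coords \<open>p \<notin> {p. p$1 \<in> A1}\<close> \<open>\<epsilon> > 0\<close>
      by (fastforce simp: mem_vertical_segment mem_square)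
    ultimately have "vertical_segment (p$1) (b - 2 * \<epsilon>) (b + 4 * \<epsilon>) \<subseteq> \<Omega>"
      using connected_subset_or_disjoint_if_frontier_disjoint[OF connected_vertical_segment]
      by blast
    moreover have "p \<in> vertical_segment (p$1) (b - 2 * \<epsilon>) (b + 4 * \<epsilon>)"
      using p \<open>\<epsilon> > 0\<close> by (simp add: mem_vertical_segment mem_square)
    ultimately show False
      using p by (simp add: outer_parallel_set_def subset_iff)
  qed
qed

text \<open>For \<open>C = {}\<close> the \<open>SOME\<close> is arbitrary, but the shadow is then a single point, of measure
  \<open>0 = 2 diam {}\<close>, so empty cover sets need no special treatment.\<close>

definition shadow :: "(real^2) set \<Rightarrow> 2 \<Rightarrow> real set" where
  "shadow C k = {(SOME p. p \<in> C)$k - diameter C .. (SOME p. p \<in> C)$k + diameter C}"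

lemma mem_shadow:
  assumes "bounded C" "p \<in> C"
  shows "p$k \<in> shadow C k"
proof -
  let ?q = "SOME p. p \<in> C"
  have "?q \<in> C"
    using assms(2) by (rule someI)
  then have "dist (p$k) (?q$k) \<le> diameter C"
    using dist_vec_nth_le diameter_bounded_bound[OF assms] order_trans by blast
  then show ?thesis
    by (auto simp: shadow_def dist_real_def)
qed

lemma emeasure_shadow:
  assumes "bounded C"
  shows "emeasure lborel (shadow C k) = ennreal (2 * diameter C)"
  using diameter_ge_0[OF assms] by (simp add: shadow_def)

lemma emeasure_square_over_shadows_le:
  fixes C :: "nat \<Rightarrow> (real^2) set"
  assumes "h \<ge> 0" "\<And>i. bounded (C i)"
    and "S \<subseteq> square h a b \<inter> {p. p$1 \<in> (\<Union>i. shadow (C i) 1)}"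
  shows "emeasure lborel S \<le> ennreal h * (\<Sum>i. ennreal (2 * diameter (C i)))"
proof -
  define c where "c i = (SOME p. p \<in> C i)$1" for i
  define G :: "nat \<Rightarrow> (real^2) set"
    where "G i = cbox (vector [c i - diameter (C i), b]) (vector [c i + diameter (C i), b + h])" for i
  have diam: "0 \<le> diameter (C i)" for i
    using diameter_ge_0[OF assms(2)] .
  have "S \<subseteq> (\<Union>i. G i)"
  proof
    fix p
    assume "p \<in> S"
    then obtain i where "p$1 \<in> shadow (C i) 1" "p \<in> square h a b"
      using assms(3) by blast
    then show "p \<in> (\<Union>i. G i)"
      by (auto simp: mem_square G_def c_def shadow_def mem_cbox_vector2)
  qed
  then have "emeasure lborel S \<le> emeasure lborel (\<Union>i. G i)"
    by (intro emeasure_mono) (auto simp: G_def)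
  also have "\<dots> \<le> (\<Sum>i. emeasure lborel (G i))"
    by (intro emeasure_subadditive_countably) (auto simp: G_def)
  also have "\<dots> = (\<Sum>i. ennreal h * ennreal (2 * diameter (C i)))"
    using assms(1) diam by (simp add: G_def emeasure_cbox_vector2 ennreal_mult' algebra_simps)
  also have "\<dots> = ennreal h * (\<Sum>i. ennreal (2 * diameter (C i)))"
    by (rule ennreal_suminf_cmult)
  finally show ?thesis .
qed

lemma emeasure_outer_parallel_set_square_le:
  fixes \<Omega> :: "(real^2) set" and C :: "nat \<Rightarrow> (real^2) set"
  assumes "connected \<Omega>" "\<epsilon> > 0" "ennreal ((8 * \<epsilon>)\<^sup>2) \<le> emeasure lborel \<Omega>"
    and cover: "frontier \<Omega> \<inter> square (6 * \<epsilon>) (a - 2 * \<epsilon>) (b - 2 * \<epsilon>) \<subseteq> (\<Union>i. C i)"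
    and bounded: "\<And>i. bounded (C i)"
  shows "emeasure lborel (outer_parallel_set \<Omega> \<epsilon> \<inter> square (2 * \<epsilon>) a b)
    \<le> ennreal (8 * \<epsilon>) * (\<Sum>i. ennreal (2 * diameter (C i)))"
    (is "?S \<le> _ * ?B")
proof (cases "?B < ennreal (\<epsilon> / 2)")
  case True
  let ?A = "\<lambda>k. \<Union>i. shadow (C i) k"
  have A_borel: "?A k \<in> sets borel" for k
    by (auto simp: shadow_def)
  have A_small: "emeasure lborel (?A k) < ennreal (\<epsilon> / 2)" for k
  proof -
    have "emeasure lborel (?A k) \<le> (\<Sum>i. emeasure lborel (shadow (C i) k))"
      by (intro emeasure_subadditive_countably) (auto simp: shadow_def)
    also have "\<dots> = ?B"
      by (simp add: emeasure_shadow[OF bounded])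
    also note True
    finally show ?thesis .
  qed
  have "p$1 \<in> ?A 1 \<and> p$2 \<in> ?A 2"
    if "p \<in> frontier \<Omega> \<inter> square (6 * \<epsilon>) (a - 2 * \<epsilon>) (b - 2 * \<epsilon>)" for p
    using that cover mem_shadow[OF bounded] by blast
  then have "outer_parallel_set \<Omega> \<epsilon> \<inter> square (2 * \<epsilon>) a b \<subseteq> {p. p$1 \<in> ?A 1}"
    by (rule outer_parallel_set_square_subset_vimage[OF assms(1-3) A_borel A_small A_borel A_small])
  then have "?S \<le> ennreal (2 * \<epsilon>) * ?B"
    using \<open>\<epsilon> > 0\<close> by (intro emeasure_square_over_shadows_le[OF _ bounded]) auto
  also have "\<dots> \<le> ennreal (8 * \<epsilon>) * ?B"
    using \<open>\<epsilon> > 0\<close> by (intro mult_right_mono) auto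
  finally show ?thesis .
next
  case False
  have "?S \<le> emeasure lborel (square (2 * \<epsilon>) a b)"
    by (intro emeasure_mono) (auto simp: square_def)
  also have "\<dots> = ennreal (8 * \<epsilon>) * ennreal (\<epsilon> / 2)"
    using \<open>\<epsilon> > 0\<close> by (simp add: square_def emeasure_cbox_vector2 flip: ennreal_mult)
  also have "\<dots> \<le> ennreal (8 * \<epsilon>) * ?B"
    using False by (intro mult_left_mono) auto
  finally show ?thesis .
qed

lemma window_index_bounds:
  fixes \<epsilon> s t :: real and m :: int
  assumes "\<epsilon> > 0" "\<bar>t - s\<bar> \<le> \<epsilon>" "2 * \<epsilon> * m - 2 * \<epsilon> \<le> t" "t \<le> 2 * \<epsilon> * m + 4 * \<epsilon>"
  shows "m \<in> {\<lceil>(s - 5 * \<epsilon>) / (2 * \<epsilon>)\<rceil> .. \<lceil>(s - 5 * \<epsilon>) / (2 * \<epsilon>)\<rceil> + 4}"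
proof -
  let ?x = "(s - 5 * \<epsilon>) / (2 * \<epsilon>)"
  have "?x \<le> m" "m \<le> ?x + 4"
    using assms by (auto simp: field_simps)
  moreover have "real_of_int m \<le> real_of_int \<lceil>?x\<rceil> + 4"
    using \<open>m \<le> ?x + 4\<close> le_of_int_ceiling[of ?x] by linarith
  then have "real_of_int m \<le> real_of_int (\<lceil>?x\<rceil> + 4)"
    by simp
  ultimately show ?thesis
    by (simp only: atLeastAtMost_iff of_int_le_iff ceiling_le)
qed

definition window :: "real \<Rightarrow> int \<times> int \<Rightarrow> (real^2) set" where
  "window \<epsilon> mn = square (6 * \<epsilon>) (2 * \<epsilon> * fst mn - 2 * \<epsilon>) (2 * \<epsilon> * snd mn - 2 * \<epsilon>)"

lemma windows_meeting_small_set: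
  fixes C :: "(real^2) set"
  assumes "\<epsilon> > 0" "bounded C" "diameter C \<le> \<epsilon>"
  shows "emeasure (count_space UNIV) {mn. C \<inter> window \<epsilon> mn \<noteq> {}} \<le> 25"
  (is "emeasure _ ?W \<le> _")
proof (cases "C = {}")
  case False
  then obtain q where q: "q \<in> C"
    by blast
  define k where "k j = \<lceil>(q$j - 5 * \<epsilon>) / (2 * \<epsilon>)\<rceil>" for j
  have close: "\<bar>p$j - q$j\<bar> \<le> \<epsilon>" if "p \<in> C" for p j
    using dist_vec_nth_le[of p j q] diameter_bounded_bound[OF assms(2) that q] assms(3)
    by (simp add: dist_real_def)
  have "?W \<subseteq> {k 1..k 1 + 4} \<times> {k 2..k 2 + 4}"
    using window_index_bounds[OF assms(1) close] by (fastforce simp: k_def window_def mem_square)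
  then have "emeasure (count_space UNIV) ?W
      \<le> emeasure (count_space UNIV) ({k 1..k 1 + 4} \<times> {k 2..k 2 + 4})"
    by (intro emeasure_mono) auto
  also have "\<dots> = 25"
    by (simp add: card_cartesian_product)
  finally show ?thesis .
qed simp

lemma nn_integral_diameter_windows_le:
  fixes C :: "(real^2) set"
  assumes "\<epsilon> > 0" "bounded C" "diameter C \<le> \<epsilon>"
  shows "(\<integral>\<^sup>+mn. ennreal (2 * diameter (C \<inter> window \<epsilon> mn)) \<partial>count_space UNIV)
    \<le> 50 * ennreal (diameter C)"
proof -
  let ?W = "{mn. C \<inter> window \<epsilon> mn \<noteq> {}}"
  have "(\<integral>\<^sup>+mn. ennreal (2 * diameter (C \<inter> window \<epsilon> mn)) \<partial>count_space UNIV)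
      \<le> (\<integral>\<^sup>+mn. ennreal (2 * diameter C) * indicator ?W mn \<partial>count_space UNIV)"
    using assms(2)
    by (intro nn_integral_mono) (auto simp: indicator_def intro!: ennreal_leI diameter_subset)
  also have "\<dots> = ennreal (2 * diameter C) * emeasure (count_space UNIV) ?W"
    by (simp add: nn_integral_cmult_indicator)
  also have "\<dots> \<le> ennreal (2 * diameter C) * 25"
    using windows_meeting_small_set[OF assms] by (intro mult_left_mono) auto
  also have "\<dots> = 50 * ennreal (diameter C)"
    using diameter_ge_0[OF assms(2)] by (simp add: ennreal_mult mult_ac)
  finally show ?thesis .
qed

lemma closed_outer_parallel_set:
  assumes "open \<Omega>"
  shows "closed (outer_parallel_set \<Omega> \<epsilon>)"
proof -
  have "outer_parallel_set \<Omega> \<epsilon> = - \<Omega> \<inter> {x. infdist x \<Omega> \<le> \<epsilon>}"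
    by (auto simp: outer_parallel_set_def)
  also have "closed \<dots>"
    using assms by (intro closed_Int closed_Collect_le continuous_intros) auto
  finally show ?thesis .
qed

lemma emeasure_le_nn_integral_grid_squares:
  fixes S :: "(real^2) set"
  assumes "S \<in> sets borel" "h > 0"
  shows "emeasure lborel S
    \<le> (\<integral>\<^sup>+mn. emeasure lborel (S \<inter> square h (h * of_int (fst mn)) (h * of_int (snd mn)))
      \<partial>count_space UNIV)"
proof -
  define cell where "cell mn = {p \<in> S. (\<lfloor>p$1 / h\<rfloor>, \<lfloor>p$2 / h\<rfloor>) = mn}" for mn
  have cell_borel: "cell mn \<in> sets borel" for mn
    using assms(1) by (simp add: cell_def)
  have "S = (\<Union>mn. cell mn)"
    by (auto simp: cell_def)
  then have "emeasure lborel S = emeasure lborel (\<Union>mn. cell mn)"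
    by simp
  also have "\<dots> = (\<integral>\<^sup>+mn. emeasure lborel (cell mn) \<partial>count_space UNIV)"
    using cell_borel by (intro emeasure_UN_countable) (auto simp: disjoint_family_on_def cell_def)
  also have "\<dots> \<le> (\<integral>\<^sup>+mn. emeasure lborel (S \<inter> square h (h * of_int (fst mn)) (h * of_int (snd mn)))
      \<partial>count_space UNIV)"
  proof (intro nn_integral_mono emeasure_mono)
    fix mn :: "int \<times> int"
    have floor_bounds: "h * \<lfloor>t / h\<rfloor> \<le> t \<and> t \<le> h * \<lfloor>t / h\<rfloor> + h" for t
      using floor_divide_lower[OF assms(2), of t] floor_divide_upper[OF assms(2), of t]
      by (simp_all add: algebra_simps)
    show "cell mn \<subseteq> S \<inter> square h (h * of_int (fst mn)) (h * of_int (snd mn))"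
    proof
      fix p
      assume "p \<in> cell mn"
      then have "p \<in> S" "mn = (\<lfloor>p$1 / h\<rfloor>, \<lfloor>p$2 / h\<rfloor>)"
        by (auto simp: cell_def)
      then show "p \<in> S \<inter> square h (h * of_int (fst mn)) (h * of_int (snd mn))"
        using floor_bounds[of "p$1"] floor_bounds[of "p$2"] by (simp add: mem_square)
    qed
    show "S \<inter> square h (h * of_int (fst mn)) (h * of_int (snd mn)) \<in> sets lborel"
      using assms(1) by (auto simp: square_def)
  qed
  finally show ?thesis .
qed

lemma emeasure_outer_parallel_set_le_cover:
  fixes \<Omega> :: "(real^2) set" and C :: "nat \<Rightarrow> (real^2) set"
  assumes "open \<Omega>" "connected \<Omega>" "\<epsilon> > 0" "ennreal ((8 * \<epsilon>)\<^sup>2) \<le> emeasure lborel \<Omega>"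
    and cover: "frontier \<Omega> \<subseteq> (\<Union>i. C i)"
    and bounded: "\<And>i. bounded (C i)" and small: "\<And>i. diameter (C i) \<le> \<epsilon>"
  shows "emeasure lborel (outer_parallel_set \<Omega> \<epsilon>)
    \<le> ennreal (400 * \<epsilon>) * (\<Sum>i. ennreal (diameter (C i)))"
proof -
  let ?S = "outer_parallel_set \<Omega> \<epsilon>"
  have "?S \<in> sets borel"
    using closed_outer_parallel_set[OF assms(1)] by (rule borel_closed)
  then have "emeasure lborel ?S \<le> (\<integral>\<^sup>+mn. emeasure lborel
      (?S \<inter> square (2 * \<epsilon>) (2 * \<epsilon> * of_int (fst mn)) (2 * \<epsilon> * of_int (snd mn))) \<partial>count_space UNIV)"
    using \<open>\<epsilon> > 0\<close> by (intro emeasure_le_nn_integral_grid_squares) auto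
  also have "\<dots> \<le> (\<integral>\<^sup>+mn. ennreal (8 * \<epsilon>) * (\<Sum>i. ennreal (2 * diameter (C i \<inter> window \<epsilon> mn)))
      \<partial>count_space UNIV)"
    using cover bounded
    by (intro nn_integral_mono emeasure_outer_parallel_set_square_le[OF assms(2-4)])
      (auto simp: window_def)
  also have "\<dots> = ennreal (8 * \<epsilon>) *
      (\<Sum>i. \<integral>\<^sup>+mn. ennreal (2 * diameter (C i \<inter> window \<epsilon> mn)) \<partial>count_space UNIV)"
    by (simp add: nn_integral_cmult nn_integral_suminf)
  also have "\<dots> \<le> ennreal (8 * \<epsilon>) * (\<Sum>i. 50 * ennreal (diameter (C i)))"
    using nn_integral_diameter_windows_le[OF \<open>\<epsilon> > 0\<close> bounded small]
    by (intro mult_left_mono suminf_le summableI) auto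
  also have "\<dots> = ennreal (400 * \<epsilon>) * (\<Sum>i. ennreal (diameter (C i)))"
    using \<open>\<epsilon> > 0\<close> by (simp add: ennreal_mult mult_ac)
  finally show ?thesis .
qed

lemma ennreal_le_const_mult_INF:
  fixes c :: real and f :: "'a \<Rightarrow> ennreal"
  assumes "c > 0" "\<And>i. i \<in> I \<Longrightarrow> M \<le> ennreal c * f i"
  shows "M \<le> ennreal c * (INF i\<in>I. f i)"
proof -
  have inverse: "ennreal c * ennreal (1 / c) = 1"
    using assms(1) by (simp flip: ennreal_mult)
  have "M * ennreal (1 / c) \<le> (INF i\<in>I. f i)"
  proof (rule INF_greatest)
    fix i
    assume "i \<in> I"
    have "M * ennreal (1 / c) \<le> ennreal c * f i * ennreal (1 / c)"
      using assms(2)[OF \<open>i \<in> I\<close>] by (rule mult_right_mono) simp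
    also have "\<dots> = (ennreal c * ennreal (1 / c)) * f i"
      by (simp only: mult_ac)
    also have "\<dots> = f i"
      using inverse by simp
    finally show "M * ennreal (1 / c) \<le> f i" .
  qed
  then have "ennreal c * (M * ennreal (1 / c)) \<le> ennreal c * (INF i\<in>I. f i)"
    by (rule mult_left_mono) simp
  moreover have "ennreal c * (M * ennreal (1 / c)) = M"
    using inverse by (metis mult.assoc mult.commute mult_1_right)
  ultimately show ?thesis
    by simp
qed

lemma emeasure_outer_parallel_set_le_hausdorff1:
  fixes \<Omega> :: "(real^2) set"
  assumes "open \<Omega>" "connected \<Omega>" "\<epsilon> > 0" "ennreal ((8 * \<epsilon>)\<^sup>2) \<le> emeasure lborel \<Omega>"
  shows "emeasure lborel (outer_parallel_set \<Omega> \<epsilon>) \<le> ennreal (400 * \<epsilon>) * hausdorff1 (frontier \<Omega>)"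
proof -
  have "emeasure lborel (outer_parallel_set \<Omega> \<epsilon>)
      \<le> ennreal (400 * \<epsilon>) * hausdorff1_pre \<epsilon> (frontier \<Omega>)"
    unfolding hausdorff1_pre_def using emeasure_outer_parallel_set_le_cover[OF assms] \<open>\<epsilon> > 0\<close>
    by (intro ennreal_le_const_mult_INF) auto
  also have "\<dots> \<le> ennreal (400 * \<epsilon>) * hausdorff1 (frontier \<Omega>)"
    using \<open>\<epsilon> > 0\<close> by (intro mult_left_mono) (auto simp: hausdorff1_def intro: SUP_upper)
  finally show ?thesis .
qed

theorem mainTheorem4:
  "\<exists>c::real. c > 0 \<and>
     (\<forall>(\<Omega>::(real^2) set) (\<epsilon>::real).
        open \<Omega> \<and> connected \<Omega> \<and> \<Omega> \<noteq> {} \<and> \<epsilon> > 0 \<and>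
        ennreal ((8 * \<epsilon>)\<^sup>2) \<le> emeasure lborel \<Omega> \<longrightarrow>
        emeasure lborel {x. x \<notin> \<Omega> \<and> infdist x \<Omega> \<le> \<epsilon>}
          \<le> ennreal (c * \<epsilon>) * hausdorff1 (frontier \<Omega>))"
proof (intro exI[of _ 400] conjI allI impI)
  fix \<Omega> :: "(real^2) set" and \<epsilon> :: real
  assume "open \<Omega> \<and> connected \<Omega> \<and> \<Omega> \<noteq> {} \<and> \<epsilon> > 0 \<and> ennreal ((8 * \<epsilon>)\<^sup>2) \<le> emeasure lborel \<Omega>"
  then show "emeasure lborel {x. x \<notin> \<Omega> \<and> infdist x \<Omega> \<le> \<epsilon>}
      \<le> ennreal (400 * \<epsilon>) * hausdorff1 (frontier \<Omega>)"
    using emeasure_outer_parallel_set_le_hausdorff1[of \<Omega> \<epsilon>] by (simp add: outer_parallel_set_def)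
qed simp

end
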